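(* Let $p$ be a prime and let $L$ be a finitely generated pro-$p$ group. Suppose that $M$ is an abelian normal subgroup of $L$ equal to the normal closure $M=\langle T^L\rangle$ of a finite set $T$ consisting of right Engel elements of $L$, and that $L/M$ is nilpotent. Then $L$ is nilpotent.
   Context: An element $g$ of a group $L$ is right Engel if for every $x\in L$ there is $n=n(g,x)$ with $[g,{}_nx]=1$, where $[y,{}_0x]=y$ and $[y,{}_{i+1}x]=[[y,{}_ix],x]$. Subgroups, normal closures and generation are in the topological (closed) sense. *)

theory Defs
  imports "HOL-Analysis.Analysis" "HOL-Algebra.Algebra"
begin

definition topological_group :: "('a, 'b) monoid_scheme \<Rightarrow> 'a topology \<Rightarrow> bool" where
  "topological_group G T \<longleftrightarrow> group G \<and> topspace T = carrier G \<and>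
     continuous_map (prod_topology T T) T (\<lambda>(x, y). x \<otimes>\<^bsub>G\<^esub> y) \<and>
     continuous_map T T (\<lambda>x. inv\<^bsub>G\<^esub> x)"

definition pro_p_group :: "nat \<Rightarrow> ('a, 'b) monoid_scheme \<Rightarrow> 'a topology \<Rightarrow> bool" where
  "pro_p_group p G T \<longleftrightarrow> topological_group G T \<and> compact_space T \<and> Hausdorff_space T \<and>
     (\<forall>x \<in> topspace T. connected_component_of_set T x = {x}) \<and>
     (\<forall>N. N \<lhd> G \<and> openin T N \<longrightarrow> (\<exists>k. card (rcosets\<^bsub>G\<^esub> N) = p ^ k))"

definition top_fin_gen :: "('a, 'b) monoid_scheme \<Rightarrow> 'a topology \<Rightarrow> bool" where
  "top_fin_gen G T \<longleftrightarrow> (\<exists>A. finite A \<and> A \<subseteq> carrier G \<and> (T closure_of (generate G A)) = carrier G)"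

definition top_normal_closure :: "('a, 'b) monoid_scheme \<Rightarrow> 'a topology \<Rightarrow> 'a set \<Rightarrow> 'a set" where
  "top_normal_closure G T S =
     T closure_of (generate G (\<Union>g \<in> carrier G. (\<lambda>s. inv\<^bsub>G\<^esub> g \<otimes>\<^bsub>G\<^esub> s \<otimes>\<^bsub>G\<^esub> g) ` S))"

definition gcomm :: "('a, 'b) monoid_scheme \<Rightarrow> 'a \<Rightarrow> 'a \<Rightarrow> 'a" where
  "gcomm G x y = inv\<^bsub>G\<^esub> x \<otimes>\<^bsub>G\<^esub> inv\<^bsub>G\<^esub> y \<otimes>\<^bsub>G\<^esub> x \<otimes>\<^bsub>G\<^esub> y"

primrec engel_comm :: "('a, 'b) monoid_scheme \<Rightarrow> 'a \<Rightarrow> nat \<Rightarrow> 'a \<Rightarrow> 'a" where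
  "engel_comm G y 0 x = y"
| "engel_comm G y (Suc i) x = gcomm G (engel_comm G y i x) x"

definition right_engel :: "('a, 'b) monoid_scheme \<Rightarrow> 'a \<Rightarrow> bool" where
  "right_engel G g \<longleftrightarrow> (\<forall>x \<in> carrier G. \<exists>n. engel_comm G g n x = \<one>\<^bsub>G\<^esub>)"

primrec lower_central :: "('a, 'b) monoid_scheme \<Rightarrow> nat \<Rightarrow> 'a set" where
  "lower_central G 0 = carrier G"
| "lower_central G (Suc i) =
     generate G {gcomm G a b | a b. a \<in> lower_central G i \<and> b \<in> carrier G}"

definition nilpotent_group :: "('a, 'b) monoid_scheme \<Rightarrow> bool" where
  "nilpotent_group G \<longleftrightarrow> (\<exists>n. lower_central G n = {\<one>\<^bsub>G\<^esub>})"

end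

theory Submission
  imports Defs
begin

(*
  As M is abelian and normal, L acts on M by conjugation and m |-> [m, y] is an endomorphism
  of M; an element of M is right Engel when every y acts nilpotently on it. Fix a finitely
  generated dense subgroup H = <Y>. The core of the proof is algebraic: each t in S is bounded
  Engel on H, i.e. [t, y_1, ..., y_K] = 1 for all y_i in H.

  Since gamma_c(L) <= M, H is generated modulo H cap M by the left-normed commutators in Y of
  weight < c, and each of them commutes with Y modulo those of higher weight. Removing these
  generators one at a time, lowest weight first, we show that every subgroup G generated by the
  remaining ones together with H cap M has the engel_bound_property: an element a of M that is
  Engel modulo an H-invariant Q is bounded Engel modulo Q as soon as G acts trivially on
  <a^H>Q/Q. This is trivial while G contains H, and for G = H cap M, which centralises M, it
  yields the claim with Q = 1. In the step from <z, G'> to G' the action of z commutes with that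
  of H modulo Q, so the elements b_j = [a, j z] are Engel modulo Q and the property of <z, G'>
  bounds b_j modulo <Q, b_(j+1)^H>; since some b_n lies in Q, these bounds add up.

  The bound K is then made uniform over the finite set S and extended by continuity from H to
  L, and from S to its closed normal closure M, on which m |-> [m, y_1, ..., y_K] is a continuous
  homomorphism. Hence gamma_(c+K)(L) = 1.
*)

section \<open>Commutator calculus\<close>

definition gconj :: "('a, 'b) monoid_scheme \<Rightarrow> 'a \<Rightarrow> 'a \<Rightarrow> 'a" where
  "gconj G h x = inv\<^bsub>G\<^esub> h \<otimes>\<^bsub>G\<^esub> x \<otimes>\<^bsub>G\<^esub> h"

definition left_normed_comm :: "('a, 'b) monoid_scheme \<Rightarrow> 'a \<Rightarrow> 'a list \<Rightarrow> 'a" where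
  "left_normed_comm G x ys = foldl (gcomm G) x ys"

definition words :: "'a set \<Rightarrow> nat \<Rightarrow> 'a list set" where
  "words A n = {ys. set ys \<subseteq> A \<and> length ys = n}"

lemma left_normed_comm_Nil [simp]: "left_normed_comm G x [] = x"
  by (simp add: left_normed_comm_def)

lemma left_normed_comm_Cons [simp]:
  "left_normed_comm G x (y # ys) = left_normed_comm G (gcomm G x y) ys"
  by (simp add: left_normed_comm_def)

lemma left_normed_comm_append:
  "left_normed_comm G x (ys @ zs) = left_normed_comm G (left_normed_comm G x ys) zs"
  by (simp add: left_normed_comm_def)

lemma engel_comm_eq_left_normed_comm: "engel_comm G x n y = left_normed_comm G x (replicate n y)"
  by (induction n) (simp_all add: replicate_append_same[symmetric] left_normed_comm_append)

lemma words_iff [simp]: "ys \<in> words A n \<longleftrightarrow> set ys \<subseteq> A \<and> length ys = n"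
  by (simp add: words_def)

lemma words_add_split:
  "ys \<in> words A (m + n) \<Longrightarrow> take m ys \<in> words A m \<and> drop m ys \<in> words A n"
  by (auto dest: in_set_takeD in_set_dropD)

context group
begin

lemma mult_inv_cancel_left [simp]: "x \<in> carrier G \<Longrightarrow> y \<in> carrier G \<Longrightarrow> x \<otimes> (inv x \<otimes> y) = y"
  by (simp add: m_assoc[symmetric])

lemma gcomm_closed [simp]: "x \<in> carrier G \<Longrightarrow> y \<in> carrier G \<Longrightarrow> gcomm G x y \<in> carrier G"
  by (simp add: gcomm_def)

lemma gconj_closed [simp]: "h \<in> carrier G \<Longrightarrow> x \<in> carrier G \<Longrightarrow> gconj G h x \<in> carrier G"
  by (simp add: gconj_def)

lemma gcomm_one_left [simp]: "y \<in> carrier G \<Longrightarrow> gcomm G \<one> y = \<one>"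
  by (simp add: gcomm_def)

lemma gcomm_one_right [simp]: "x \<in> carrier G \<Longrightarrow> gcomm G x \<one> = \<one>"
  by (simp add: gcomm_def)

lemma gconj_one_left [simp]: "x \<in> carrier G \<Longrightarrow> gconj G \<one> x = x"
  by (simp add: gconj_def)

lemma gconj_one_right [simp]: "h \<in> carrier G \<Longrightarrow> gconj G h \<one> = \<one>"
  by (simp add: gconj_def)

lemma gcomm_eq_inv_mult_gconj: "x \<in> carrier G \<Longrightarrow> y \<in> carrier G \<Longrightarrow> gcomm G x y = inv x \<otimes> gconj G y x"
  by (simp add: gcomm_def gconj_def m_assoc)

lemma gconj_mult:
  "h \<in> carrier G \<Longrightarrow> x \<in> carrier G \<Longrightarrow> y \<in> carrier G \<Longrightarrow> gconj G h (x \<otimes> y) = gconj G h x \<otimes> gconj G h y"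
  by (simp add: gconj_def m_assoc)

lemma gconj_inv: "h \<in> carrier G \<Longrightarrow> x \<in> carrier G \<Longrightarrow> gconj G h (inv x) = inv (gconj G h x)"
  by (simp add: gconj_def inv_mult_group m_assoc)

lemma gconj_gconj:
  "g \<in> carrier G \<Longrightarrow> h \<in> carrier G \<Longrightarrow> x \<in> carrier G \<Longrightarrow> gconj G h (gconj G g x) = gconj G (g \<otimes> h) x"
  by (simp add: gconj_def inv_mult_group m_assoc)

lemma gconj_gconj_inv [simp]:
  "h \<in> carrier G \<Longrightarrow> x \<in> carrier G \<Longrightarrow> gconj G h (gconj G (inv h) x) = x"
  by (simp add: gconj_gconj)

lemma gconj_gcomm:
  "h \<in> carrier G \<Longrightarrow> x \<in> carrier G \<Longrightarrow> y \<in> carrier G \<Longrightarrow>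
    gconj G h (gcomm G x y) = gcomm G (gconj G h x) (gconj G h y)"
  by (simp add: gcomm_def gconj_mult gconj_inv)

lemma gcomm_mult_right:
  "x \<in> carrier G \<Longrightarrow> g \<in> carrier G \<Longrightarrow> h \<in> carrier G \<Longrightarrow>
    gcomm G x (g \<otimes> h) = gcomm G x h \<otimes> gconj G h (gcomm G x g)"
  by (simp add: gcomm_def gconj_def inv_mult_group m_assoc)

lemma gcomm_inv_right:
  "x \<in> carrier G \<Longrightarrow> g \<in> carrier G \<Longrightarrow> gcomm G x (inv g) = inv (gconj G (inv g) (gcomm G x g))"
  by (simp add: gcomm_def gconj_def inv_mult_group m_assoc)

lemma gconj_eq_mult_gcomm: "x \<in> carrier G \<Longrightarrow> h \<in> carrier G \<Longrightarrow> gconj G h x = x \<otimes> gcomm G x h"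
  by (simp add: gcomm_def gconj_def m_assoc[symmetric])

lemma left_normed_comm_one [simp]: "set ys \<subseteq> carrier G \<Longrightarrow> left_normed_comm G \<one> ys = \<one>"
  by (induction ys) auto

lemma gconj_left_normed_comm:
  "h \<in> carrier G \<Longrightarrow> x \<in> carrier G \<Longrightarrow> set ys \<subseteq> carrier G \<Longrightarrow>
    gconj G h (left_normed_comm G x ys) = left_normed_comm G (gconj G h x) (map (gconj G h) ys)"
  by (induction ys arbitrary: x) (auto simp: gconj_gcomm)

lemma left_normed_comm_gconj:
  assumes h: "h \<in> carrier G" and x: "x \<in> carrier G" and ys: "set ys \<subseteq> carrier G"
  shows "left_normed_comm G (gconj G h x) ys =
    gconj G h (left_normed_comm G x (map (gconj G (inv h)) ys))"
proof -
  have "map (gconj G h) (map (gconj G (inv h)) ys) = ys"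
    using h ys by (induction ys) auto
  moreover have "set (map (gconj G (inv h)) ys) \<subseteq> carrier G"
    using h ys by auto
  ultimately show ?thesis
    using h x by (simp add: gconj_left_normed_comm)
qed

lemma lower_central_subset_carrier: "lower_central G n \<subseteq> carrier G"
proof (induction n)
  case (Suc n)
  then have "{gcomm G a b | a b. a \<in> lower_central G n \<and> b \<in> carrier G} \<subseteq> carrier G"
    by auto
  then show ?case by (simp add: generate_incl)
qed simp

lemma one_in_lower_central: "\<one> \<in> lower_central G n"
  by (cases n) (auto intro: generate.one)

lemma left_normed_comm_eq_one_mono:
  assumes A: "A \<subseteq> carrier G" and K: "\<forall>ys\<in>words A K. left_normed_comm G x ys = \<one>" and "K \<le> K'"
  shows "\<forall>ys\<in>words A K'. left_normed_comm G x ys = \<one>"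
proof
  fix ys assume ys: "ys \<in> words A K'"
  then have "take K ys \<in> words A K" "set (drop K ys) \<subseteq> carrier G"
    using \<open>K \<le> K'\<close> A by (auto dest: in_set_takeD in_set_dropD)
  then show "left_normed_comm G x ys = \<one>"
    using K left_normed_comm_append[of G x "take K ys" "drop K ys"] by simp
qed

end

lemma (in group_hom) lower_central_hom:
  "x \<in> lower_central G i \<Longrightarrow> h x \<in> lower_central H i"
proof (induction i arbitrary: x)
  case (Suc i)
  let ?X = "{gcomm G a b | a b. a \<in> lower_central G i \<and> b \<in> carrier G}"
  let ?Y = "{gcomm H a b | a b. a \<in> lower_central H i \<and> b \<in> carrier H}"
  have X_carrier: "?X \<subseteq> carrier G"
    using G.lower_central_subset_carrier G.gcomm_closed by blast
  have gens: "h g \<in> ?Y" if "g \<in> ?X" for g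
  proof -
    obtain a b where ab: "g = gcomm G a b" "a \<in> lower_central G i" "b \<in> carrier G"
      using \<open>g \<in> ?X\<close> by blast
    have "a \<in> carrier G" using ab(2) G.lower_central_subset_carrier by blast
    then have "h g = gcomm H (h a) (h b)"
      using ab(1,3) by (simp add: gcomm_def)
    moreover have "h a \<in> lower_central H i" "h b \<in> carrier H"
      using Suc.IH ab(2,3) by auto
    ultimately show ?thesis by blast
  qed
  have "x \<in> generate G ?X" using Suc.prems by simp
  then have "h x \<in> generate H ?Y"
  proof (induction rule: generate.induct)
    case one
    then show ?case by (simp add: generate.one)
  next
    case (incl g)
    then show ?case using gens by (simp add: generate.incl)
  next
    case (inv g)
    then have "g \<in> carrier G" using X_carrier by blast
    then show ?case using generate.inv[OF gens[OF inv]] by simp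
  next
    case (eng g g')
    then have "g \<in> carrier G" "g' \<in> carrier G" using G.generate_incl[OF X_carrier] by blast+
    then show ?case using generate.eng[OF eng.IH] by simp
  qed
  then show ?case by simp
qed (simp add: hom_closed)

section \<open>Hausdorff topological groups\<close>

context group
begin

lemma subset_top_normal_closure:
  assumes "topological_group G T" and "S \<subseteq> carrier G"
  shows "S \<subseteq> top_normal_closure G T S"
proof -
  let ?gens = "\<Union>g\<in>carrier G. (\<lambda>s. inv g \<otimes> s \<otimes> g) ` S"
  have "S \<subseteq> ?gens" using assms(2) by force
  also have "\<dots> \<subseteq> generate G ?gens" by (auto intro: generate.incl)
  also have "\<dots> \<subseteq> T closure_of generate G ?gens"
    using assms
    by (intro closure_of_subset) (auto simp: topological_group_def intro!: generate_incl)
  finally show ?thesis by (simp add: top_normal_closure_def)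
qed

context
  fixes T
  assumes tg: "topological_group G T" and hausdorff: "Hausdorff_space T"
begin

lemma topspace_eq_carrier: "topspace T = carrier G"
  using tg by (simp add: topological_group_def)

lemma continuous_map_mult:
  assumes "continuous_map T T f" and "continuous_map T T g"
  shows "continuous_map T T (\<lambda>x. f x \<otimes> g x)"
proof -
  have "continuous_map (prod_topology T T) T (\<lambda>(x, y). x \<otimes> y)"
    using tg by (simp add: topological_group_def)
  then have "continuous_map T T ((\<lambda>(x, y). x \<otimes> y) \<circ> (\<lambda>x. (f x, g x)))"
    using assms by (intro continuous_map_compose[OF continuous_map_pairedI])
  then show ?thesis by (simp add: o_def)
qed

lemma continuous_map_inv:
  assumes "continuous_map T T f"
  shows "continuous_map T T (\<lambda>x. inv (f x))"
proof -
  have "continuous_map T T (\<lambda>x. inv x)"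
    using tg by (simp add: topological_group_def)
  then have "continuous_map T T ((\<lambda>x. inv x) \<circ> f)"
    using assms by (intro continuous_map_compose)
  then show ?thesis by (simp add: o_def)
qed

lemma continuous_map_gcomm:
  "continuous_map T T f \<Longrightarrow> continuous_map T T g \<Longrightarrow> continuous_map T T (\<lambda>x. gcomm G (f x) (g x))"
  unfolding gcomm_def by (intro continuous_map_mult continuous_map_inv)

lemma continuous_map_left_normed_comm:
  "continuous_map T T f \<Longrightarrow> set ys \<subseteq> carrier G \<Longrightarrow> continuous_map T T (\<lambda>x. left_normed_comm G (f x) ys)"
proof (induction ys arbitrary: f)
  case (Cons y ys)
  then have "continuous_map T T (\<lambda>x. gcomm G (f x) y)"
    by (intro continuous_map_gcomm) (simp_all add: topspace_eq_carrier)
  then show ?case using Cons by simp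
qed simp

lemma eq_one_on_closure:
  assumes f: "continuous_map T T f" and A: "A \<subseteq> carrier G" and one: "\<forall>x\<in>A. f x = \<one>"
    and x: "x \<in> T closure_of A"
  shows "f x = \<one>"
proof -
  have "closedin T {x \<in> topspace T. f x \<in> {\<one>}}"
    using closedin_Hausdorff_singleton[OF hausdorff] topspace_eq_carrier
    by (intro closedin_continuous_map_preimage[OF f]) simp
  moreover have "A \<subseteq> {x \<in> topspace T. f x \<in> {\<one>}}"
    using A one topspace_eq_carrier by auto
  ultimately show ?thesis
    using closure_of_minimal x by blast
qed

lemma left_normed_comm_eq_one_if_dense:
  assumes D: "D \<subseteq> carrier G" "T closure_of D = carrier G"
  shows "x \<in> carrier G \<Longrightarrow> \<forall>ys\<in>words D K. left_normed_comm G x ys = \<one> \<Longrightarrow>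
    \<forall>ys\<in>words (carrier G) K. left_normed_comm G x ys = \<one>"
proof (induction K arbitrary: x)
  case (Suc K)
  show ?case
  proof
    fix ys assume "ys \<in> words (carrier G) (Suc K)"
    then obtain y ys' where ys: "ys = y # ys'" "y \<in> carrier G" "ys' \<in> words (carrier G) K"
      by (auto simp: length_Suc_conv)
    have "\<forall>zs\<in>words (carrier G) K. left_normed_comm G (gcomm G x d) zs = \<one>" if "d \<in> D" for d
    proof (rule Suc.IH)
      show "\<forall>zs\<in>words D K. left_normed_comm G (gcomm G x d) zs = \<one>"
        using Suc.prems(2) that by (auto dest: bspec[of _ _ "d # _"])
    qed (use Suc.prems(1) that D in auto)
    then have "left_normed_comm G (gcomm G x d) ys' = \<one>" if "d \<in> D" for d
      using ys(3) that by blast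
    moreover have "continuous_map T T (\<lambda>d. left_normed_comm G (gcomm G x d) ys')"
      using Suc.prems(1) ys(3) topspace_eq_carrier continuous_map_id[unfolded id_def]
      by (intro continuous_map_left_normed_comm continuous_map_gcomm) auto
    ultimately have "left_normed_comm G (gcomm G x y) ys' = \<one>"
      using eq_one_on_closure[OF _ D(1)] D(2) ys(2) by blast
    then show "left_normed_comm G x ys = \<one>" using ys(1) by simp
  qed
qed simp

end

end

section \<open>Groups with an abelian normal subgroup\<close>

locale abelian_normal = group L for L (structure) +
  fixes M
  assumes M_normal: "M \<lhd> L"
    and M_abelian: "\<forall>a\<in>M. \<forall>b\<in>M. a \<otimes> b = b \<otimes> a"
begin

sublocale M: subgroup M L
  using M_normal normal_imp_subgroup by blast

lemma M_comm: "a \<in> M \<Longrightarrow> b \<in> M \<Longrightarrow> a \<otimes> b = b \<otimes> a"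
  using M_abelian by blast

lemma gconj_closed_M: "h \<in> carrier L \<Longrightarrow> m \<in> M \<Longrightarrow> gconj L h m \<in> M"
  unfolding gconj_def using normal.inv_op_closed1[OF M_normal] by blast

lemma gcomm_closed_M: "m \<in> M \<Longrightarrow> y \<in> carrier L \<Longrightarrow> gcomm L m y \<in> M"
  by (simp add: gcomm_eq_inv_mult_gconj gconj_closed_M M.m_closed M.m_inv_closed)

lemma gcomm_M_M: "m \<in> M \<Longrightarrow> w \<in> M \<Longrightarrow> gcomm L m w = \<one>"
  using M_comm[of m w] unfolding gcomm_def
  by (metis M.m_inv_closed M.mem_carrier inv_mult_group l_inv m_assoc m_closed inv_closed)

lemma gcomm_mult_left_M:
  assumes "m \<in> M" "m' \<in> M" "y \<in> carrier L"
  shows "gcomm L (m \<otimes> m') y = gcomm L m y \<otimes> gcomm L m' y"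
proof -
  have "inv m \<otimes> gconj L y m \<in> M"
    using assms by (simp add: M.m_closed M.m_inv_closed gconj_closed_M)
  then have "inv m' \<otimes> (inv m \<otimes> gconj L y m) = (inv m \<otimes> gconj L y m) \<otimes> inv m'"
    using M_comm M.m_inv_closed assms(2) by blast
  then show ?thesis
    using assms by (simp add: gcomm_eq_inv_mult_gconj gconj_mult inv_mult_group m_assoc[symmetric])
qed

lemma gcomm_inv_left_M:
  assumes "m \<in> M" "y \<in> carrier L"
  shows "gcomm L (inv m) y = inv (gcomm L m y)"
proof -
  have "gcomm L (inv m) y \<otimes> gcomm L m y = \<one>"
    using gcomm_mult_left_M[OF M.m_inv_closed[OF assms(1)] assms] assms by simp
  then show ?thesis
    using assms by (simp add: inv_equality)
qed

lemma left_normed_comm_closed_M: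
  "m \<in> M \<Longrightarrow> set ys \<subseteq> carrier L \<Longrightarrow> left_normed_comm L m ys \<in> M"
  by (induction ys arbitrary: m) (auto simp: gcomm_closed_M)

lemma subgroup_left_normed_comm_preimage:
  assumes Q: "subgroup Q L" and Ys: "\<And>ys. ys \<in> Ys \<Longrightarrow> set ys \<subseteq> carrier L"
  shows "subgroup {m \<in> M. \<forall>ys\<in>Ys. left_normed_comm L m ys \<in> Q} L"
proof -
  have mult: "left_normed_comm L (m \<otimes> m') ys = left_normed_comm L m ys \<otimes> left_normed_comm L m' ys"
    and inv: "left_normed_comm L (inv m) ys = inv (left_normed_comm L m ys)"
    if "m \<in> M" "m' \<in> M" "set ys \<subseteq> carrier L" for m m' ys
    using that
    by (induction ys arbitrary: m m') (auto simp: gcomm_mult_left_M gcomm_inv_left_M gcomm_closed_M)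
  show ?thesis
    using Ys by (intro subgroupI)
      (auto simp: mult inv M.m_closed M.m_inv_closed subgroup.m_closed[OF Q]
        subgroup.m_inv_closed[OF Q] subgroup.one_closed[OF Q] intro!: exI[of _ \<one>])
qed

lemma M_comm_outer: "a \<in> M \<Longrightarrow> b \<in> M \<Longrightarrow> c \<in> M \<Longrightarrow> c \<otimes> (a \<otimes> b) = b \<otimes> (a \<otimes> c)"
  by (metis M_comm M.m_closed M.mem_carrier m_assoc)

(* In module notation: m (z - 1)(y - 1) = m (y - 1)(z - 1) + m^(yz) ([z, y] - 1). *)
lemma gcomm_gcomm_swap:
  assumes m: "m \<in> M" and y: "y \<in> carrier L" and z: "z \<in> carrier L"
  shows "gcomm L (gcomm L m z) y =
    gcomm L (gcomm L m y) z \<otimes> gcomm L (gconj L (y \<otimes> z) m) (gcomm L z y)"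
proof -
  define A B C D E where "A = inv m" and "B = gconj L z m" and "C = gconj L y m"
    and "D = gconj L (z \<otimes> y) m" and "E = gconj L (y \<otimes> z) m"
  have in_M: "A \<in> M" "B \<in> M" "C \<in> M" "D \<in> M" "E \<in> M"
    unfolding A_def B_def C_def D_def E_def using m y z
    by (simp_all add: gconj_closed_M M.m_inv_closed)
  have carr: "A \<in> carrier L" "B \<in> carrier L" "C \<in> carrier L" "D \<in> carrier L" "E \<in> carrier L"
    using in_M by (simp_all add: M.mem_carrier)
  have mc: "m \<in> carrier L" using m by (rule M.mem_carrier)
  have "(y \<otimes> z) \<otimes> gcomm L z y = z \<otimes> y"
    using y z by (simp add: gcomm_def m_assoc)
  then have DE: "gconj L (gcomm L z y) E = D"
    using y z mc by (simp add: D_def E_def gconj_gconj)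
  have lhs: "gcomm L (gcomm L m z) y = inv (A \<otimes> B) \<otimes> (inv C \<otimes> D)"
    using mc y z
    by (simp add: A_def B_def C_def D_def gcomm_eq_inv_mult_gconj gconj_mult gconj_inv gconj_gconj)
  have rhs1: "gcomm L (gcomm L m y) z = inv (A \<otimes> C) \<otimes> (inv B \<otimes> E)"
    using mc y z
    by (simp add: A_def B_def C_def E_def gcomm_eq_inv_mult_gconj gconj_mult gconj_inv gconj_gconj)
  have rhs2: "gcomm L E (gcomm L z y) = inv E \<otimes> D"
    using carr y z by (simp add: gcomm_eq_inv_mult_gconj[of E] DE)
  have "inv (A \<otimes> B) \<otimes> inv C = inv (A \<otimes> C) \<otimes> inv B"
    using in_M carr M_comm_outer[of A B C] by (simp add: inv_mult_group[symmetric])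
  then have "inv (A \<otimes> B) \<otimes> (inv C \<otimes> D) = (inv (A \<otimes> C) \<otimes> inv B) \<otimes> D"
    using carr by (simp add: m_assoc[symmetric])
  also have "\<dots> = (inv (A \<otimes> C) \<otimes> (inv B \<otimes> E)) \<otimes> (inv E \<otimes> D)"
    using carr by (simp add: m_assoc)
  finally show ?thesis
    unfolding lhs rhs1 E_def[symmetric] rhs2 .
qed

lemma lower_central_subset_M_if_nilpotent_quotient:
  assumes "nilpotent_group (L Mod M)"
  obtains c where "lower_central L c \<subseteq> M"
proof -
  obtain c where c: "lower_central (L Mod M) c = {M}"
    using assms unfolding nilpotent_group_def by auto
  interpret quot: group_hom L "L Mod M" "\<lambda>a. M #> a"
    by (intro group_hom.intro group_hom_axioms.intro group_axioms
        normal.factorgroup_is_group[OF M_normal] normal.r_coset_hom_Mod[OF M_normal])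
  have "x \<in> M" if "x \<in> lower_central L c" for x
  proof -
    have "M #> x = M" using quot.lower_central_hom[OF that] c by auto
    then show ?thesis
      using coset_join1 M.subgroup_axioms lower_central_subset_carrier that by blast
  qed
  then show thesis using that by blast
qed

lemma nilpotent_if_M_left_normed_comm_trivial:
  assumes c: "lower_central L c \<subseteq> M"
    and K: "\<forall>m\<in>M. \<forall>ys\<in>words (carrier L) K. left_normed_comm L m ys = \<one>"
  shows "nilpotent_group L"
proof -
  define V where "V n = {m \<in> M. \<forall>ys\<in>words (carrier L) n. left_normed_comm L m ys \<in> {\<one>}}" for n
  have "lower_central L (c + j) \<subseteq> V (K - j)" if "j \<le> K" for j
    using that
  proof (induction j)
    case 0
    then show ?case using c K by (auto simp: V_def)
  next
    case (Suc j)
    have "{gcomm L a b | a b. a \<in> lower_central L (c + j) \<and> b \<in> carrier L} \<subseteq> V (K - Suc j)"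
    proof clarify
      fix a b assume a: "a \<in> lower_central L (c + j)" and b: "b \<in> carrier L"
      have "K - j = Suc (K - Suc j)" using Suc.prems by simp
      then have "a \<in> V (Suc (K - Suc j))"
        using Suc.IH Suc.prems a by auto
      have "left_normed_comm L a (b # ys) = \<one>" if "ys \<in> words (carrier L) (K - Suc j)" for ys
      proof -
        have "b # ys \<in> words (carrier L) (Suc (K - Suc j))" using b that by simp
        then show ?thesis using \<open>a \<in> V _\<close> unfolding V_def by blast
      qed
      then show "gcomm L a b \<in> V (K - Suc j)"
        using \<open>a \<in> V _\<close> b by (simp add: V_def gcomm_closed_M)
    qed
    moreover have "subgroup (V (K - Suc j)) L"
      unfolding V_def by (rule subgroup_left_normed_comm_preimage[OF triv_subgroup]) simp
    ultimately show ?case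
      by (simp add: generate_subgroup_incl)
  qed
  then have "lower_central L (c + K) \<subseteq> {\<one>}"
    by (force simp: V_def)
  then show ?thesis
    unfolding nilpotent_group_def using one_in_lower_central by blast
qed

lemma top_normal_closure_left_normed_comm_eq_one:
  assumes tg: "topological_group L T" and hausdorff: "Hausdorff_space T"
    and S: "S \<subseteq> carrier L" and M_eq: "M = top_normal_closure L T S"
    and K: "\<forall>t\<in>S. \<forall>ys\<in>words (carrier L) K. left_normed_comm L t ys = \<one>"
    and m: "m \<in> M" and ys: "ys \<in> words (carrier L) K"
  shows "left_normed_comm L m ys = \<one>"
proof -
  let ?gens = "\<Union>g\<in>carrier L. (\<lambda>s. inv g \<otimes> s \<otimes> g) ` S"
  let ?V = "{m \<in> M. \<forall>zs\<in>{ys}. left_normed_comm L m zs \<in> {\<one>}}"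
  have "inv g \<otimes> t \<otimes> g \<in> ?V" if g: "g \<in> carrier L" and t: "t \<in> S" for g t
  proof -
    have t_M: "t \<in> M" using t subset_top_normal_closure[OF tg S] M_eq by blast
    have "map (gconj L (inv g)) ys \<in> words (carrier L) K" using ys g by auto
    then have "left_normed_comm L (gconj L g t) ys = \<one>"
      using K t g ys S by (subst left_normed_comm_gconj) auto
    then show ?thesis
      using gconj_closed_M[OF g t_M] by (simp add: gconj_def)
  qed
  then have "?gens \<subseteq> ?V" by blast
  moreover have "subgroup ?V L"
    using ys by (intro subgroup_left_normed_comm_preimage triv_subgroup) auto
  ultimately have "generate L ?gens \<subseteq> ?V"
    by (rule generate_subgroup_incl)
  moreover have "continuous_map T T (\<lambda>x. left_normed_comm L x ys)"
    using continuous_map_left_normed_comm[OF tg hausdorff continuous_map_id[unfolded id_def]] ys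
    by auto
  moreover have "m \<in> T closure_of generate L ?gens"
    using m unfolding M_eq top_normal_closure_def .
  ultimately show ?thesis
    using eq_one_on_closure[OF tg hausdorff] M.subset by blast
qed

end

section \<open>Engel elements of M under a finitely generated subgroup H\<close>

locale engel_module = abelian_normal +
  fixes Y H
  assumes Y_subset: "Y \<subseteq> carrier L"
    and H_eq: "H = generate L Y"
begin

sublocale H: subgroup H L
  using H_eq generate_is_subgroup Y_subset by simp

lemma Y_subset_H: "Y \<subseteq> H"
  unfolding H_eq by (auto intro: generate.incl)

definition H_submodule :: "'a set \<Rightarrow> bool" where
  "H_submodule P \<longleftrightarrow> P \<subseteq> M \<and> subgroup P L \<and> (\<forall>h\<in>H. \<forall>x\<in>P. gconj L h x \<in> P)"

definition H_orbit :: "'a \<Rightarrow> 'a set" where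
  "H_orbit a = (\<lambda>h. gconj L h a) ` H"

definition action_kernel :: "'a set \<Rightarrow> 'a set \<Rightarrow> 'a set" where
  "action_kernel P Q = {g \<in> H. \<forall>m\<in>P. gcomm L m g \<in> Q}"

definition engel_mod :: "'a set \<Rightarrow> 'a \<Rightarrow> bool" where
  "engel_mod Q a \<longleftrightarrow> (\<forall>y\<in>H. \<exists>n. left_normed_comm L a (replicate n y) \<in> Q)"

definition bounded_engel_mod :: "'a set \<Rightarrow> 'a \<Rightarrow> bool" where
  "bounded_engel_mod Q a \<longleftrightarrow> (\<exists>K. \<forall>ys\<in>words H K. left_normed_comm L a ys \<in> Q)"

definition engel_bound_property :: "'a set \<Rightarrow> bool" where
  "engel_bound_property G \<longleftrightarrow> (\<forall>Q a. H_submodule Q \<longrightarrow> a \<in> M \<longrightarrow> engel_mod Q a \<longrightarrow>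
     G \<subseteq> action_kernel (generate L (H_orbit a)) Q \<longrightarrow> bounded_engel_mod Q a)"

definition cong_mod :: "'a set \<Rightarrow> 'a \<Rightarrow> 'a \<Rightarrow> bool" where
  "cong_mod Q x y \<longleftrightarrow> x \<in> M \<and> y \<in> M \<and> inv x \<otimes> y \<in> Q"

lemma H_submoduleD:
  assumes "H_submodule P"
  shows H_submodule_subset_M: "P \<subseteq> M"
    and H_submodule_subgroup: "subgroup P L"
    and H_submodule_gconj: "\<And>h x. h \<in> H \<Longrightarrow> x \<in> P \<Longrightarrow> gconj L h x \<in> P"
  using assms by (auto simp: H_submodule_def)

lemma H_submodule_gcomm:
  assumes P: "H_submodule P" and m: "m \<in> P" and h: "h \<in> H"
  shows "gcomm L m h \<in> P"
proof -
  have "m \<in> carrier L" using m H_submodule_subset_M[OF P] M.subset by blast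
  then show ?thesis
    using subgroup.m_closed[OF H_submodule_subgroup[OF P]]
      subgroup.m_inv_closed[OF H_submodule_subgroup[OF P]] H_submodule_gconj[OF P h m] m h
    by (simp add: gcomm_eq_inv_mult_gconj)
qed

lemma H_submodule_left_normed_comm:
  "H_submodule P \<Longrightarrow> m \<in> P \<Longrightarrow> set ys \<subseteq> H \<Longrightarrow> left_normed_comm L m ys \<in> P"
  by (induction ys arbitrary: m) (auto simp: H_submodule_gcomm)

lemma H_submodule_trivial: "H_submodule {\<one>}"
  by (simp add: H_submodule_def triv_subgroup M.one_closed)

lemma H_submodule_generate:
  assumes S: "S \<subseteq> M" and S_invariant: "\<And>h x. h \<in> H \<Longrightarrow> x \<in> S \<Longrightarrow> gconj L h x \<in> S"
  shows "H_submodule (generate L S)"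
proof -
  have S_carrier: "S \<subseteq> carrier L" using S M.subset by blast
  have "gconj L h x \<in> generate L S" if "x \<in> generate L S" "h \<in> H" for h x
    using that(1)
  proof induction
    case one
    then show ?case using that(2) by (simp add: generate.one)
  next
    case (incl x)
    then show ?case using S_invariant that(2) by (simp add: generate.incl)
  next
    case (inv x)
    then have "x \<in> carrier L" "h \<in> carrier L" using S_carrier that(2) by auto
    then have "gconj L h (inv x) = inv (gconj L h x)" by (simp add: gconj_inv)
    then show ?case
      using generate.inv[OF S_invariant[OF that(2) inv]] by simp
  next
    case (eng x y)
    then have "x \<in> carrier L" "y \<in> carrier L" "h \<in> carrier L"
      using that(2) generate_incl[OF S_carrier] by auto
    then show ?case
      using generate.eng[OF eng.IH] by (simp add: gconj_mult)
  qed
  then show ?thesis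
    unfolding H_submodule_def
    using S generate_is_subgroup[OF S_carrier] generate_subgroup_incl[OF _ M.subgroup_axioms]
    by blast
qed

lemma H_orbit_subset_M: "a \<in> M \<Longrightarrow> H_orbit a \<subseteq> M"
  unfolding H_orbit_def using gconj_closed_M H.mem_carrier by blast

lemma mem_H_orbit_self: "a \<in> M \<Longrightarrow> a \<in> H_orbit a"
  unfolding H_orbit_def by (rule image_eqI[of _ _ \<one>]) (simp_all add: M.mem_carrier H.one_closed)

lemma gconj_H_orbit:
  assumes a: "a \<in> M" and h: "h \<in> H" and x: "x \<in> H_orbit a"
  shows "gconj L h x \<in> H_orbit a"
proof -
  obtain g where g: "g \<in> H" "x = gconj L g a" using x unfolding H_orbit_def by blast
  then have "gconj L h x = gconj L (g \<otimes> h) a"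
    using a h by (simp add: gconj_gconj M.mem_carrier H.mem_carrier)
  then show ?thesis
    unfolding H_orbit_def using g(1) h H.m_closed by blast
qed

lemma H_submodule_span: "a \<in> M \<Longrightarrow> H_submodule (generate L (H_orbit a))"
  using H_submodule_generate[of "H_orbit a"] H_orbit_subset_M gconj_H_orbit by blast

lemma H_submodule_span_Un:
  assumes "H_submodule Q" "a \<in> M"
  shows "H_submodule (generate L (Q \<union> H_orbit a))"
proof (rule H_submodule_generate)
  show "Q \<union> H_orbit a \<subseteq> M"
    using assms H_submodule_subset_M H_orbit_subset_M by blast
  show "gconj L h x \<in> Q \<union> H_orbit a" if "h \<in> H" "x \<in> Q \<union> H_orbit a" for h x
    using assms that H_submodule_gconj gconj_H_orbit by blast
qed

lemma action_kernel_subgroup: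
  assumes P: "H_submodule P" and Q: "H_submodule Q"
  shows "subgroup (action_kernel P Q) L"
proof (rule subgroupI)
  show "action_kernel P Q \<subseteq> carrier L"
    unfolding action_kernel_def using H.mem_carrier by auto
  show "action_kernel P Q \<noteq> {}"
  proof -
    have "gcomm L m \<one> = \<one>" if "m \<in> P" for m
      using that H_submodule_subset_M[OF P] M.mem_carrier by auto
    then have "\<one> \<in> action_kernel P Q"
      unfolding action_kernel_def
      using H.one_closed subgroup.one_closed[OF H_submodule_subgroup[OF Q]] by auto
    then show ?thesis by blast
  qed
next
  fix g g' assume g: "g \<in> action_kernel P Q" and g': "g' \<in> action_kernel P Q"
  have carr: "g \<in> carrier L" "g' \<in> carrier L" "m \<in> carrier L" if "m \<in> P" for m
    using g g' that H_submodule_subset_M[OF P] H.mem_carrier M.mem_carrier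
    unfolding action_kernel_def by auto
  show "inv g \<in> action_kernel P Q"
    unfolding action_kernel_def
  proof (intro CollectI conjI ballI)
    show "inv g \<in> H" using g H.m_inv_closed by (simp add: action_kernel_def)
    fix m assume "m \<in> P"
    then have "gcomm L m g \<in> Q" using g by (simp add: action_kernel_def)
    then show "gcomm L m (inv g) \<in> Q"
      using \<open>m \<in> P\<close> carr g H.m_inv_closed H_submodule_gconj[OF Q]
        subgroup.m_inv_closed[OF H_submodule_subgroup[OF Q]]
      by (simp add: gcomm_inv_right action_kernel_def)
  qed
  show "g \<otimes> g' \<in> action_kernel P Q"
    unfolding action_kernel_def
  proof (intro CollectI conjI ballI)
    show "g \<otimes> g' \<in> H" using g g' H.m_closed by (simp add: action_kernel_def)
    fix m assume "m \<in> P"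
    then show "gcomm L m (g \<otimes> g') \<in> Q"
      using carr g g' H_submodule_gconj[OF Q] subgroup.m_closed[OF H_submodule_subgroup[OF Q]]
      by (simp add: gcomm_mult_right action_kernel_def)
  qed
qed

lemma gconj_action_kernel:
  assumes P: "H_submodule P" and Q: "H_submodule Q" and g: "g \<in> action_kernel P Q" and h: "h \<in> H"
  shows "gconj L h g \<in> action_kernel P Q"
  unfolding action_kernel_def
proof (intro CollectI conjI ballI)
  have g_H: "g \<in> H" using g by (simp add: action_kernel_def)
  then show "gconj L h g \<in> H" using h by (simp add: gconj_def H.m_closed H.m_inv_closed)
  fix m assume m: "m \<in> P"
  have m': "gconj L (inv h) m \<in> P" using H_submodule_gconj[OF P] h H.m_inv_closed m by blast
  have "m \<in> carrier L" using m H_submodule_subset_M[OF P] M.mem_carrier by blast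
  then have "gcomm L m (gconj L h g) = gconj L h (gcomm L (gconj L (inv h) m) g)"
    using h g_H by (simp add: gconj_gcomm)
  then show "gcomm L m (gconj L h g) \<in> Q"
    using m' g h H_submodule_gconj[OF Q] by (simp add: action_kernel_def)
qed

lemma action_kernel_antimono: "P' \<subseteq> P \<Longrightarrow> Q \<subseteq> Q' \<Longrightarrow> action_kernel P Q \<subseteq> action_kernel P' Q'"
  unfolding action_kernel_def by auto

lemma cong_mod_refl: "H_submodule Q \<Longrightarrow> x \<in> M \<Longrightarrow> cong_mod Q x x"
  unfolding cong_mod_def using subgroup.one_closed[OF H_submodule_subgroup] by simp

lemma cong_mod_sym:
  assumes Q: "H_submodule Q" and xy: "cong_mod Q x y"
  shows "cong_mod Q y x"
proof -
  have "x \<in> carrier L" "y \<in> carrier L" using xy by (auto simp: cong_mod_def)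
  then have "inv y \<otimes> x = inv (inv x \<otimes> y)" by (simp add: inv_mult_group)
  then show ?thesis
    using xy subgroup.m_inv_closed[OF H_submodule_subgroup[OF Q]] by (simp add: cong_mod_def)
qed

lemma cong_mod_trans:
  assumes Q: "H_submodule Q" and xy: "cong_mod Q x y" and yz: "cong_mod Q y z"
  shows "cong_mod Q x z"
proof -
  have "x \<in> carrier L" "y \<in> carrier L" "z \<in> carrier L" using xy yz by (auto simp: cong_mod_def)
  then have "inv x \<otimes> z = (inv x \<otimes> y) \<otimes> (inv y \<otimes> z)" by (simp add: m_assoc)
  then show ?thesis
    using xy yz subgroup.m_closed[OF H_submodule_subgroup[OF Q]] by (simp add: cong_mod_def)
qed

lemma cong_mod_mem:
  assumes Q: "H_submodule Q" and xy: "cong_mod Q x y" and x: "x \<in> Q"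
  shows "y \<in> Q"
proof -
  have "x \<in> carrier L" "y \<in> carrier L" using xy by (auto simp: cong_mod_def)
  then have "y = x \<otimes> (inv x \<otimes> y)" by simp
  then show ?thesis
    using xy x subgroup.m_closed[OF H_submodule_subgroup[OF Q]] by (metis cong_mod_def)
qed

lemma cong_mod_mult_right:
  assumes Q: "H_submodule Q" and x: "x \<in> M" and q: "q \<in> Q"
  shows "cong_mod Q (x \<otimes> q) x"
proof -
  have "q \<in> M" using q H_submodule_subset_M[OF Q] by blast
  then have "inv (x \<otimes> q) \<otimes> x = inv q"
    using x by (simp add: inv_mult_group m_assoc)
  then show ?thesis
    using x q \<open>q \<in> M\<close> subgroup.m_inv_closed[OF H_submodule_subgroup[OF Q]]
    by (simp add: cong_mod_def M.m_closed)
qed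

lemma cong_mod_gcomm:
  assumes Q: "H_submodule Q" and xy: "cong_mod Q x y" and h: "h \<in> H"
  shows "cong_mod Q (gcomm L x h) (gcomm L y h)"
proof -
  have M: "x \<in> M" "y \<in> M" using xy by (auto simp: cong_mod_def)
  then have "inv (gcomm L x h) \<otimes> gcomm L y h = gcomm L (inv x \<otimes> y) h"
    using h by (simp add: gcomm_mult_left_M gcomm_inv_left_M M.m_inv_closed)
  then show ?thesis
    using xy M h H_submodule_gcomm[OF Q] by (simp add: cong_mod_def gcomm_closed_M)
qed

lemma cong_mod_left_normed_comm:
  "H_submodule Q \<Longrightarrow> cong_mod Q x y \<Longrightarrow> set ys \<subseteq> H \<Longrightarrow>
    cong_mod Q (left_normed_comm L x ys) (left_normed_comm L y ys)"
  by (induction ys arbitrary: x y) (auto simp: cong_mod_gcomm)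

lemma left_normed_comm_gconj_in_submodule:
  assumes Q: "H_submodule Q" and b: "b \<in> M" and h: "h \<in> H"
    and K: "\<forall>ys\<in>words H K. left_normed_comm L b ys \<in> Q" and ys: "ys \<in> words H K"
  shows "left_normed_comm L (gconj L h b) ys \<in> Q"
proof -
  have "map (gconj L (inv h)) ys \<in> words H K"
    using ys h by (auto simp: gconj_def H.m_closed H.m_inv_closed)
  then have "gconj L h (left_normed_comm L b (map (gconj L (inv h)) ys)) \<in> Q"
    using K H_submodule_gconj[OF Q h] by blast
  then show ?thesis
    using ys h b H.subset by (subst left_normed_comm_gconj) auto
qed

lemma left_normed_comm_span_in_submodule:
  assumes Q: "H_submodule Q" and Q': "H_submodule Q'" "Q \<subseteq> Q'" and b: "b \<in> M"
    and K: "\<forall>ys\<in>words H K. left_normed_comm L b ys \<in> Q'"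
    and m: "m \<in> generate L (Q \<union> H_orbit b)" and ys: "ys \<in> words H K"
  shows "left_normed_comm L m ys \<in> Q'"
proof -
  let ?V = "{m \<in> M. \<forall>ys\<in>words H K. left_normed_comm L m ys \<in> Q'}"
  have "subgroup ?V L"
    by (rule subgroup_left_normed_comm_preimage[OF H_submodule_subgroup[OF Q'(1)]])
      (use H.subset in auto)
  moreover have "Q \<subseteq> ?V"
  proof
    fix q assume q: "q \<in> Q"
    have "left_normed_comm L q ys \<in> Q'" if "ys \<in> words H K" for ys
      using H_submodule_left_normed_comm[OF Q q] that Q'(2) by auto
    then show "q \<in> ?V" using q H_submodule_subset_M[OF Q] by blast
  qed
  moreover have "H_orbit b \<subseteq> ?V"
  proof -
    have "gconj L h b \<in> ?V" if "h \<in> H" for h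
    proof -
      have "gconj L h b \<in> M" using gconj_closed_M b that by simp
      then show ?thesis using left_normed_comm_gconj_in_submodule[OF Q'(1) b that K] by blast
    qed
    then show ?thesis unfolding H_orbit_def by blast
  qed
  ultimately have "generate L (Q \<union> H_orbit b) \<subseteq> ?V"
    by (simp add: generate_subgroup_incl)
  then have "m \<in> ?V" using m by blast
  then show ?thesis using ys by blast
qed

lemma engel_mod_mono: "Q \<subseteq> Q' \<Longrightarrow> engel_mod Q a \<Longrightarrow> engel_mod Q' a"
  unfolding engel_mod_def by blast

lemma bounded_engel_mod_mono: "Q \<subseteq> Q' \<Longrightarrow> bounded_engel_mod Q a \<Longrightarrow> bounded_engel_mod Q' a"
  unfolding bounded_engel_mod_def by blast

lemma bounded_engel_mod_trans:
  assumes Q: "H_submodule Q" and Q': "H_submodule Q'" "Q \<subseteq> Q'" and b: "b \<in> M"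
    and a: "bounded_engel_mod (generate L (Q \<union> H_orbit b)) a" and "bounded_engel_mod Q' b"
  shows "bounded_engel_mod Q' a"
proof -
  obtain K1 where K1: "\<forall>ys\<in>words H K1. left_normed_comm L a ys \<in> generate L (Q \<union> H_orbit b)"
    using a by (auto simp: bounded_engel_mod_def)
  obtain K2 where K2: "\<forall>ys\<in>words H K2. left_normed_comm L b ys \<in> Q'"
    using \<open>bounded_engel_mod Q' b\<close> by (auto simp: bounded_engel_mod_def)
  have "left_normed_comm L a ys \<in> Q'" if ys: "ys \<in> words H (K1 + K2)" for ys
  proof -
    have "left_normed_comm L a ys =
        left_normed_comm L (left_normed_comm L a (take K1 ys)) (drop K1 ys)"
      using left_normed_comm_append[of L a "take K1 ys" "drop K1 ys"] by simp
    then show ?thesis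
      using left_normed_comm_span_in_submodule[OF Q Q' b K2] K1 words_add_split[OF ys] by simp
  qed
  then show ?thesis unfolding bounded_engel_mod_def by blast
qed

lemma engel_bound_property_if_H_subset:
  assumes "H \<subseteq> G"
  shows "engel_bound_property G"
  unfolding engel_bound_property_def
proof (intro allI impI)
  fix Q a assume "a \<in> M" and G: "G \<subseteq> action_kernel (generate L (H_orbit a)) Q"
  have "a \<in> generate L (H_orbit a)" using mem_H_orbit_self[OF \<open>a \<in> M\<close>] by (rule generate.incl)
  then have "left_normed_comm L a [y] \<in> Q" if "y \<in> H" for y
    using that assms G by (auto simp: action_kernel_def)
  then have "\<forall>ys\<in>words H 1. left_normed_comm L a ys \<in> Q"
    by (auto simp: length_Suc_conv)
  then show "bounded_engel_mod Q a"
    unfolding bounded_engel_mod_def by blast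
qed

lemma gcomm_mem_if_generators:
  assumes N: "subgroup N L" and N_invariant: "\<And>h x. h \<in> H \<Longrightarrow> x \<in> N \<Longrightarrow> gconj L h x \<in> N"
    and z: "z \<in> carrier L" and zY: "\<forall>y\<in>Y. gcomm L z y \<in> N" and h: "h \<in> H"
  shows "gcomm L z h \<in> N"
  using h unfolding H_eq
proof induction
  case one
  then show ?case using z subgroup.one_closed[OF N] by simp
next
  case (incl y)
  then show ?case using zY by blast
next
  case (inv y)
  have "y \<in> carrier L" "inv y \<in> H" using inv Y_subset Y_subset_H H.m_inv_closed by auto
  then show ?case
    using z N_invariant zY inv subgroup.m_inv_closed[OF N] by (simp add: gcomm_inv_right)
next
  case (eng g g')
  have "g \<in> H" "g' \<in> H" using eng.hyps H_eq by auto
  then show ?case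
    using z eng.IH N_invariant subgroup.m_closed[OF N] by (simp add: gcomm_mult_right)
qed

context
  fixes z A Q
  assumes z: "z \<in> H" and A: "H_submodule A" and Q: "H_submodule Q"
    and z_central: "\<And>h. h \<in> H \<Longrightarrow> gcomm L z h \<in> action_kernel A Q"
begin

lemma gcomm_swap_cong_mod:
  assumes m: "m \<in> A" and y: "y \<in> H"
  shows "cong_mod Q (gcomm L (gcomm L m z) y) (gcomm L (gcomm L m y) z)"
proof -
  have m_M: "m \<in> M" using m H_submodule_subset_M[OF A] by blast
  have "gconj L (y \<otimes> z) m \<in> A" using H_submodule_gconj[OF A _ m] y z H.m_closed by blast
  then have q: "gcomm L (gconj L (y \<otimes> z) m) (gcomm L z y) \<in> Q"
    using z_central[OF y] by (simp add: action_kernel_def)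
  have "gcomm L (gcomm L m y) z \<in> M" using m_M y z by (simp add: gcomm_closed_M)
  moreover have "gcomm L (gcomm L m z) y =
      gcomm L (gcomm L m y) z \<otimes> gcomm L (gconj L (y \<otimes> z) m) (gcomm L z y)"
    using y z by (intro gcomm_gcomm_swap[OF m_M]) auto
  ultimately show ?thesis
    using cong_mod_mult_right[OF Q _ q] by metis
qed

lemma replicate_swap_cong_mod:
  assumes "m \<in> A" and y: "y \<in> H"
  shows "cong_mod Q (left_normed_comm L (gcomm L m z) (replicate n y))
    (gcomm L (left_normed_comm L m (replicate n y)) z)"
  using \<open>m \<in> A\<close>
proof (induction n arbitrary: m)
  case 0
  then have "m \<in> M" using H_submodule_subset_M[OF A] by blast
  then show ?case using z by (simp add: cong_mod_refl[OF Q] gcomm_closed_M)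
next
  case (Suc n)
  have "cong_mod Q (left_normed_comm L (gcomm L (gcomm L m z) y) (replicate n y))
      (left_normed_comm L (gcomm L (gcomm L m y) z) (replicate n y))"
    using cong_mod_left_normed_comm[OF Q gcomm_swap_cong_mod[OF Suc.prems y]] y
    by (simp add: set_replicate_conv_if)
  moreover have "cong_mod Q (left_normed_comm L (gcomm L (gcomm L m y) z) (replicate n y))
      (gcomm L (left_normed_comm L (gcomm L m y) (replicate n y)) z)"
    using Suc.IH H_submodule_gcomm[OF A Suc.prems y] .
  ultimately show ?case
    by (simp add: cong_mod_trans[OF Q])
qed

lemma replicate_replicate_swap_cong_mod:
  assumes "m \<in> A" and y: "y \<in> H"
  shows "cong_mod Q (left_normed_comm L m (replicate j z @ replicate n y))
    (left_normed_comm L m (replicate n y @ replicate j z))"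
  using \<open>m \<in> A\<close>
proof (induction j arbitrary: m)
  case 0
  then have "m \<in> M" using H_submodule_subset_M[OF A] by blast
  then show ?case
    using y by (simp add: cong_mod_refl[OF Q] left_normed_comm_closed_M set_replicate_conv_if)
next
  case (Suc j)
  have "cong_mod Q (left_normed_comm L (gcomm L m z) (replicate j z @ replicate n y))
      (left_normed_comm L (left_normed_comm L (gcomm L m z) (replicate n y)) (replicate j z))"
    using Suc.IH[OF H_submodule_gcomm[OF A Suc.prems z]] by (simp add: left_normed_comm_append)
  moreover have "cong_mod Q
      (left_normed_comm L (left_normed_comm L (gcomm L m z) (replicate n y)) (replicate j z))
      (left_normed_comm L (gcomm L (left_normed_comm L m (replicate n y)) z) (replicate j z))"
    using cong_mod_left_normed_comm[OF Q replicate_swap_cong_mod[OF Suc.prems y]] z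
    by (simp add: set_replicate_conv_if)
  ultimately show ?case
    by (simp add: cong_mod_trans[OF Q] left_normed_comm_append)
qed

lemma engel_mod_left_normed_comm_replicate:
  assumes a: "a \<in> A" and "engel_mod Q a"
  shows "engel_mod Q (left_normed_comm L a (replicate j z))"
  unfolding engel_mod_def
proof
  fix y assume y: "y \<in> H"
  obtain n where "left_normed_comm L a (replicate n y) \<in> Q"
    using \<open>engel_mod Q a\<close> y by (auto simp: engel_mod_def)
  moreover have "set (replicate j z) \<subseteq> H" using z by (simp add: set_replicate_conv_if)
  ultimately have "left_normed_comm L a (replicate n y @ replicate j z) \<in> Q"
    using H_submodule_left_normed_comm[OF Q] by (simp add: left_normed_comm_append)
  then have "left_normed_comm L a (replicate j z @ replicate n y) \<in> Q"
    using cong_mod_mem[OF Q cong_mod_sym[OF Q replicate_replicate_swap_cong_mod[OF a y]]] by blast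
  then show "\<exists>n. left_normed_comm L (left_normed_comm L a (replicate j z)) (replicate n y) \<in> Q"
    by (auto simp: left_normed_comm_append)
qed

lemma z_in_action_kernel_span:
  assumes b: "b \<in> A"
  shows "z \<in> action_kernel (generate L (H_orbit b)) (generate L (Q \<union> H_orbit (gcomm L b z)))"
proof -
  let ?Q' = "generate L (Q \<union> H_orbit (gcomm L b z))"
  have b_M: "b \<in> M" using b H_submodule_subset_M[OF A] by blast
  have bz_M: "gcomm L b z \<in> M" using b_M z by (simp add: gcomm_closed_M)
  have Q': "H_submodule ?Q'" using H_submodule_span_Un[OF Q bz_M] .
  have Q_Q': "Q \<subseteq> ?Q'" by (auto intro: generate.incl)
  have bz_Q': "gcomm L b z \<in> ?Q'" using mem_H_orbit_self[OF bz_M] by (auto intro: generate.incl)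
  have "gcomm L x z \<in> ?Q'" if "x \<in> H_orbit b" for x
  proof -
    obtain h where h: "h \<in> H" "x = gconj L h b" using \<open>x \<in> H_orbit b\<close> by (auto simp: H_orbit_def)
    define k where "k = gcomm L z (inv h)"
    have k: "k \<in> action_kernel A Q" unfolding k_def using z_central h H.m_inv_closed by blast
    then have k_H: "k \<in> H" by (simp add: action_kernel_def)
    have "gcomm L x z = gcomm L (gconj L h b) (gconj L h (gconj L (inv h) z))"
      using h z by simp
    also have "\<dots> = gconj L h (gcomm L b (gconj L (inv h) z))"
      using h z b_M by (simp add: gconj_gcomm)
    also have "\<dots> = gconj L h (gcomm L b (z \<otimes> k))"
      unfolding k_def using z h gconj_eq_mult_gcomm[of z "inv h"] by simp
    also have "\<dots> = gconj L h (gcomm L b k \<otimes> gconj L k (gcomm L b z))"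
      using z k_H b_M by (simp add: gcomm_mult_right)
    finally show ?thesis
      using b k k_H h Q_Q' H_submodule_gconj[OF Q' _ bz_Q'] H_submodule_gconj[OF Q' h(1)]
        subgroup.m_closed[OF H_submodule_subgroup[OF Q']]
      by (auto simp: action_kernel_def)
  qed
  then have "generate L (H_orbit b) \<subseteq> {m \<in> M. \<forall>ys\<in>{[z]}. left_normed_comm L m ys \<in> ?Q'}"
    using H_orbit_subset_M[OF b_M] z
    by (intro generate_subgroup_incl
        subgroup_left_normed_comm_preimage[OF H_submodule_subgroup[OF Q']]) auto
  then show ?thesis
    using z by (auto simp: action_kernel_def)
qed

lemma bounded_engel_mod_next:
  assumes IH: "engel_bound_property (generate L (insert z S))"
    and S: "S \<subseteq> action_kernel A Q" and b: "b \<in> A" and "engel_mod Q b"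
  shows "bounded_engel_mod (generate L (Q \<union> H_orbit (gcomm L b z))) b"
proof -
  let ?B = "generate L (H_orbit b)" and ?Q' = "generate L (Q \<union> H_orbit (gcomm L b z))"
  have b_M: "b \<in> M" using b H_submodule_subset_M[OF A] by blast
  have Q': "H_submodule ?Q'" using H_submodule_span_Un[OF Q] b_M z by (simp add: gcomm_closed_M)
  have Q_Q': "Q \<subseteq> ?Q'" by (auto intro: generate.incl)
  have "?B \<subseteq> A"
    using H_submodule_gconj[OF A] b unfolding H_orbit_def
    by (intro generate_subgroup_incl[OF _ H_submodule_subgroup[OF A]]) blast
  then have "S \<subseteq> action_kernel ?B ?Q'"
    using S action_kernel_antimono[OF _ Q_Q'] by blast
  moreover have "z \<in> action_kernel ?B ?Q'" using z_in_action_kernel_span[OF b] .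
  ultimately have "generate L (insert z S) \<subseteq> action_kernel ?B ?Q'"
    by (intro generate_subgroup_incl action_kernel_subgroup H_submodule_span b_M Q') auto
  moreover have "engel_mod ?Q' b" using engel_mod_mono[OF Q_Q'] \<open>engel_mod Q b\<close> .
  ultimately show ?thesis
    using IH Q' b_M unfolding engel_bound_property_def by blast
qed

end

lemma engel_bound_property_step:
  assumes z: "z \<in> H" and zY: "\<forall>y\<in>Y. gcomm L z y \<in> generate L S"
    and IH: "engel_bound_property (generate L (insert z S))"
  shows "engel_bound_property (generate L S)"
  unfolding engel_bound_property_def
proof (intro allI impI)
  fix Q a
  define A where "A = generate L (H_orbit a)"
  assume Q: "H_submodule Q" and a: "a \<in> M" and "engel_mod Q a"
    and S_kernel: "generate L S \<subseteq> action_kernel (generate L (H_orbit a)) Q"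
  have A: "H_submodule A" unfolding A_def using H_submodule_span[OF a] .
  have a_A: "a \<in> A" unfolding A_def using mem_H_orbit_self[OF a] by (rule generate.incl)
  have z_central: "gcomm L z h \<in> action_kernel A Q" if "h \<in> H" for h
  proof (rule gcomm_mem_if_generators[OF action_kernel_subgroup[OF A Q]])
    show "gconj L h' x \<in> action_kernel A Q" if "h' \<in> H" "x \<in> action_kernel A Q" for h' x
      using gconj_action_kernel[OF A Q] that by blast
    show "\<forall>y\<in>Y. gcomm L z y \<in> action_kernel A Q"
      using zY S_kernel unfolding A_def by blast
  qed (use z that in simp_all)
  define b where "b j = left_normed_comm L a (replicate j z)" for j
  define Qs where "Qs j = generate L (Q \<union> H_orbit (b j))" for j
  have b_A: "b j \<in> A" for j
    unfolding b_def using H_submodule_left_normed_comm[OF A a_A] z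
    by (simp add: set_replicate_conv_if)
  then have b_M: "b j \<in> M" for j using H_submodule_subset_M[OF A] by blast
  have b_Suc: "b (Suc j) = gcomm L (b j) z" for j
    unfolding b_def by (simp add: replicate_append_same[symmetric] left_normed_comm_append)
  have Qs: "H_submodule (Qs j)" for j unfolding Qs_def using H_submodule_span_Un[OF Q b_M] .
  have Q_Qs: "Q \<subseteq> Qs j" for j unfolding Qs_def by (auto intro: generate.incl)
  have "S \<subseteq> action_kernel A Q"
    using S_kernel generate.incl[of _ S L] unfolding A_def by blast
  then have "bounded_engel_mod (Qs (Suc j)) (b j)" for j
    unfolding Qs_def b_Suc
    using bounded_engel_mod_next[OF z A Q z_central IH _ b_A]
      engel_mod_left_normed_comm_replicate[OF z A Q z_central a_A \<open>engel_mod Q a\<close>, folded b_def]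
    by blast
  then have "bounded_engel_mod (Qs j) a" for j
  proof (induction j)
    case 0
    have "a \<in> Qs 0"
      unfolding Qs_def b_def using mem_H_orbit_self[OF a] by (auto intro: generate.incl)
    then show ?case unfolding bounded_engel_mod_def by (intro exI[of _ 0]) simp
  next
    case (Suc j)
    then show ?case
      using bounded_engel_mod_trans[OF Q Qs Q_Qs b_M] unfolding Qs_def by blast
  qed
  moreover obtain n where "b n \<in> Q"
    using \<open>engel_mod Q a\<close> z unfolding engel_mod_def b_def by blast
  then have "Qs n \<subseteq> Q"
    unfolding Qs_def using H_submodule_gconj[OF Q] H_orbit_def
    by (intro generate_subgroup_incl[OF _ H_submodule_subgroup[OF Q]]) auto
  ultimately show "bounded_engel_mod Q a"
    using bounded_engel_mod_mono by blast
qed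

lemma engel_bound_property_descend:
  assumes "finite F" "F \<subseteq> H" "\<forall>z\<in>F. \<forall>y\<in>Y. gcomm L z y \<in> generate L S"
    and "engel_bound_property (generate L (F \<union> S))"
  shows "engel_bound_property (generate L S)"
  using assms
proof (induction F rule: finite_induct)
  case (insert z F)
  have "generate L S \<subseteq> generate L (F \<union> S)" by (intro mono_generate) blast
  then have "engel_bound_property (generate L (F \<union> S))"
    using insert.prems by (intro engel_bound_property_step[of z "F \<union> S"]) auto
  then show ?case using insert by blast
qed simp

(* The left-normed commutators in Y of weight k + 1. *)
primrec left_normed_comms :: "nat \<Rightarrow> 'a set" where
  "left_normed_comms 0 = Y"
| "left_normed_comms (Suc k) = (\<lambda>(x, y). gcomm L x y) ` (left_normed_comms k \<times> Y)"

lemma finite_left_normed_comms: "finite Y \<Longrightarrow> finite (left_normed_comms k)"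
  by (induction k) simp_all

lemma left_normed_comms_subset_H: "left_normed_comms k \<subseteq> H"
proof (induction k)
  case (Suc k)
  have "gcomm L x y \<in> H" if "x \<in> H" "y \<in> H" for x y
    using that by (simp add: gcomm_def H.m_closed H.m_inv_closed)
  then show ?case using Suc Y_subset_H by auto
qed (simp add: Y_subset_H)

lemma left_normed_comms_subset_lower_central: "left_normed_comms k \<subseteq> lower_central L k"
  by (induction k) (use Y_subset in \<open>auto intro!: generate.incl\<close>)

lemma gcomm_left_normed_comms_mem:
  assumes c: "lower_central L c \<subseteq> M" and "Suc k \<le> c"
    and x: "x \<in> left_normed_comms k" and y: "y \<in> Y"
  shows "gcomm L x y \<in> (\<Union>i\<in>{Suc k..<c}. left_normed_comms i) \<union> (H \<inter> M)"
proof -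
  have xy: "gcomm L x y \<in> left_normed_comms (Suc k)" using x y by force
  show ?thesis
  proof (cases "Suc k < c")
    case True
    then show ?thesis using xy by force
  next
    case False
    then have "Suc k = c" using \<open>Suc k \<le> c\<close> by simp
    then show ?thesis
      using xy c left_normed_comms_subset_H left_normed_comms_subset_lower_central by blast
  qed
qed

lemma engel_bound_property_H_inter_M:
  assumes Y: "finite Y" and c: "lower_central L c \<subseteq> M"
  shows "engel_bound_property (generate L (H \<inter> M))"
proof -
  define T where "T k = (\<Union>i\<in>{k..<c}. left_normed_comms i) \<union> (H \<inter> M)" for k
  have "engel_bound_property (generate L (T k))" if "k \<le> c" for k
    using that
  proof (induction k)
    case 0
    have "Y \<subseteq> T 0"
      using c Y_subset Y_subset_H by (cases c) (auto simp: T_def)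
    then have "H \<subseteq> generate L (T 0)" unfolding H_eq by (rule mono_generate)
    then show ?case by (rule engel_bound_property_if_H_subset)
  next
    case (Suc k)
    have "{k..<c} = insert k {Suc k..<c}" using Suc.prems by auto
    then have "T k = left_normed_comms k \<union> T (Suc k)" by (auto simp: T_def)
    then show ?case
      using Suc engel_bound_property_descend[OF finite_left_normed_comms[OF Y]
          left_normed_comms_subset_H] gcomm_left_normed_comms_mem[OF c Suc.prems]
        generate.incl[of _ "T (Suc k)" L]
      unfolding T_def by (metis Suc_leD)
  qed
  moreover have "T c = H \<inter> M" by (simp add: T_def)
  ultimately show ?thesis by fastforce
qed

theorem bounded_engel_if_engel:
  assumes "finite Y" and "lower_central L c \<subseteq> M" and t: "t \<in> M"
    and engel: "\<forall>y\<in>H. \<exists>n. left_normed_comm L t (replicate n y) = \<one>"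
  shows "\<exists>K. \<forall>ys\<in>words H K. left_normed_comm L t ys = \<one>"
proof -
  have "H \<inter> M \<subseteq> action_kernel (generate L (H_orbit t)) {\<one>}"
    using gcomm_M_M H_submodule_subset_M[OF H_submodule_span[OF t]]
    by (auto simp: action_kernel_def)
  then have "generate L (H \<inter> M) \<subseteq> action_kernel (generate L (H_orbit t)) {\<one>}"
    by (intro generate_subgroup_incl action_kernel_subgroup H_submodule_span t H_submodule_trivial)
  moreover have "engel_mod {\<one>} t" using engel by (simp add: engel_mod_def)
  ultimately have "bounded_engel_mod {\<one>} t"
    using engel_bound_property_H_inter_M[OF assms(1,2)] t H_submodule_trivial
    unfolding engel_bound_property_def by blast
  then show ?thesis by (simp add: bounded_engel_mod_def)
qed

lemma uniform_bounded_engel_if_right_engel: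
  assumes Y: "finite Y" and c: "lower_central L c \<subseteq> M"
    and S: "finite S" "S \<subseteq> M" and engel: "\<forall>t\<in>S. right_engel L t"
  shows "\<exists>K. \<forall>t\<in>S. \<forall>ys\<in>words H K. left_normed_comm L t ys = \<one>"
proof -
  have "\<exists>K. \<forall>ys\<in>words H K. left_normed_comm L t ys = \<one>" if "t \<in> S" for t
    using bounded_engel_if_engel[OF Y c] engel that S(2) H.subset
    by (auto simp: right_engel_def engel_comm_eq_left_normed_comm)
  then obtain Kt where Kt: "\<forall>t\<in>S. \<forall>ys\<in>words H (Kt t). left_normed_comm L t ys = \<one>"
    by metis
  have "Kt t \<le> Max (Kt ` S)" if "t \<in> S" for t using S(1) that by simp
  then show ?thesis
    using Kt left_normed_comm_eq_one_mono[OF H.subset] by blast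
qed

end

theorem (in group) nilpotent_if_engel_abelian_normal_closure:
  assumes tg: "topological_group G T" and hausdorff: "Hausdorff_space T" and "top_fin_gen G T"
    and "M \<lhd> G" and "\<forall>a\<in>M. \<forall>b\<in>M. a \<otimes> b = b \<otimes> a"
    and S: "finite S" "S \<subseteq> carrier G" and engel: "\<forall>t\<in>S. right_engel G t"
    and M_eq: "M = top_normal_closure G T S" and "nilpotent_group (G Mod M)"
  shows "nilpotent_group G"
proof -
  interpret abelian_normal G M
    using assms(4,5) by (intro abelian_normal.intro abelian_normal_axioms.intro group_axioms)
  obtain c where c: "lower_central G c \<subseteq> M"
    using lower_central_subset_M_if_nilpotent_quotient assms(10) by blast
  obtain Y where Y: "finite Y" "Y \<subseteq> carrier G" "T closure_of generate G Y = carrier G"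
    using assms(3) unfolding top_fin_gen_def by blast
  interpret engel_module G M Y "generate G Y"
    using Y(2) by unfold_locales auto
  have "S \<subseteq> M"
    using subset_top_normal_closure[OF tg S(2)] M_eq by simp
  then obtain K where "\<forall>t\<in>S. \<forall>ys\<in>words (generate G Y) K. left_normed_comm G t ys = \<one>"
    using uniform_bounded_engel_if_right_engel[OF Y(1) c S(1)] engel by blast
  then have "\<forall>t\<in>S. \<forall>ys\<in>words (carrier G) K. left_normed_comm G t ys = \<one>"
    using left_normed_comm_eq_one_if_dense[OF tg hausdorff H.subset Y(3)] S(2) by blast
  then have "\<forall>m\<in>M. \<forall>ys\<in>words (carrier G) K. left_normed_comm G m ys = \<one>"
    using top_normal_closure_left_normed_comm_eq_one[OF tg hausdorff S(2) M_eq] by blast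
  then show ?thesis
    using nilpotent_if_M_left_normed_comm_trivial[OF c] by blast
qed

theorem lemma3p3:
  fixes p :: nat and L :: "('a, 'b) monoid_scheme" and \<T> :: "'a topology"
    and M S :: "'a set"
  assumes "Factorial_Ring.prime p"
    and "pro_p_group p L \<T>"
    and "top_fin_gen L \<T>"
    and "M \<lhd> L"
    and "\<forall>a \<in> M. \<forall>b \<in> M. a \<otimes>\<^bsub>L\<^esub> b = b \<otimes>\<^bsub>L\<^esub> a"
    and "finite S" and "S \<subseteq> carrier L"
    and "\<forall>t \<in> S. right_engel L t"
    and "M = top_normal_closure L \<T> S"
    and "nilpotent_group (L Mod M)"
  shows "nilpotent_group L"
proof -
  have "topological_group L \<T>" and "Hausdorff_space \<T>"
    using assms(2) by (simp_all add: pro_p_group_def)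
  then show ?thesis
    using group.nilpotent_if_engel_abelian_normal_closure[OF _ _ _ assms(3-10)]
    by (simp add: topological_group_def)
qed

end
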